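(* Let $\rho$ be a probability measure on $\mathbb{R}$ and write its Lebesgue decomposition as $\rho=a\,\rho_{ac}+b\,\rho_d+c\,\rho_s$, where $a,b,c\ge 0$, $a+b+c=1$, $\rho_{ac}$ is a probability measure with a density with respect to Lebesgue measure, $\rho_d$ is a discrete probability measure and $\rho_s$ is a singular probability measure without atoms. If $a>0$, then \[\forall \alpha>0\qquad \sup_{\|(s,t)\|\ge\alpha}\left|\int_{\mathbb{R}} e^{isz+itz^2}\,d\rho(z)\right|<1.\]
   Context: $\|\cdot\|$ denotes the Euclidean norm on $\mathbb{R}^2$. *)

theory Defs
  imports "HOL-Probability.Probability"
begin

definition discrete_measure :: "real measure \<Rightarrow> bool" where
  "discrete_measure \<mu> \<longleftrightarrow> (\<exists>S. countable S \<and> S \<in> sets borel \<and> measure \<mu> (UNIV - S) = 0)"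

definition singular_continuous_measure :: "real measure \<Rightarrow> bool" where
  "singular_continuous_measure \<mu> \<longleftrightarrow>
     (\<exists>N \<in> sets borel. emeasure lborel N = 0 \<and> measure \<mu> (UNIV - N) = 0)
     \<and> (\<forall>x. measure \<mu> {x} = 0)"

end

theory Submission
  imports Defs
begin

text \<open>
  Write \<open>\<phi> z = s*z + t*z\<^sup>2\<close> and rotate the characteristic integral by its argument \<open>\<theta>\<close>: its
  modulus becomes \<open>\<integral> cos (\<phi> z - \<theta>) d\<rho>\<close>, and the integrand is at most \<open>cos \<delta>\<close> unless \<open>\<phi> z\<close> lies
  within \<open>\<delta>\<close> of \<open>\<theta>\<close> modulo \<open>2\<pi>\<close>. So it suffices to find \<open>\<delta>\<close> such that, uniformly in \<open>\<theta>\<close> and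
  \<open>\<parallel>(s,t)\<parallel> \<ge> \<alpha>\<close>, this event has \<open>\<rho>\<^sub>a\<^sub>c\<close>-mass at most \<open>1/2\<close>; the discrete and singular parts
  are simply bounded by their total mass. By tightness and absolute continuity of \<open>\<rho>\<^sub>a\<^sub>c\<close> this
  reduces to a Lebesgue measure estimate on \<open>[-M, M]\<close>: where \<open>|\<phi>'| \<ge> \<gamma>\<close>, the change of variables
  \<open>z \<mapsto> \<phi> z\<close> bounds the preimage of the \<open>2\<pi>\<close>-periodic union of \<open>\<delta>\<close>-intervals by \<open>O(\<delta>/\<gamma>)\<close>,
  while \<open>|\<phi>'| < \<gamma>\<close> confines \<open>z\<close> to an interval of length \<open>\<gamma>/|t|\<close> around the critical point.
\<close>

lemma absolutely_continuous_measure_small: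
  assumes N: "finite_measure N" "sets N = sets \<mu>" and ac: "absolutely_continuous \<mu> N"
    and e: "0 < e"
  shows "\<exists>\<kappa>>0. \<forall>W\<in>sets \<mu>. emeasure \<mu> W < ennreal \<kappa> \<longrightarrow> measure N W < e"
proof (rule ccontr)
  assume "\<not> ?thesis"
  then have "\<forall>n::nat. \<exists>W\<in>sets \<mu>. emeasure \<mu> W < ennreal ((1/2)^n) \<and> e \<le> measure N W"
    by (metis not_less zero_less_divide_1_iff zero_less_numeral zero_less_power)
  then obtain W where W: "\<And>n. W n \<in> sets \<mu>" "\<And>n. emeasure \<mu> (W n) < ennreal ((1/2)^n)"
    "\<And>n. e \<le> measure N (W n)"
    by metis
  have "emeasure \<mu> (W n) < \<infinity>" for n
    using W(2) by (rule order.strict_trans) simp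
  moreover have "summable (\<lambda>n. measure \<mu> (W n))"
  proof (rule summable_comparison_test')
    show "norm (measure \<mu> (W n)) \<le> (1/2)^n" for n
    proof -
      have "measure \<mu> (W n) \<le> (1/2)^n"
        unfolding measure_def using less_imp_le[OF W(2)[of n]] by (rule enn2real_leI[rotated]) simp
      then show ?thesis by simp
    qed
  qed simp
  ultimately have "limsup W \<in> null_sets \<mu>"
    by (rule borel_cantelli_limsup1[OF W(1)])
  then have null: "limsup W \<in> null_sets N"
    using ac unfolding absolutely_continuous_def by blast
  interpret N: finite_measure N by fact
  define U where "U n = (\<Union>k\<in>{n..}. W k)" for n
  have "(\<lambda>n. measure N (U n)) \<longlonglongrightarrow> measure N (\<Inter>(range U))"
    using W(1) N(2) by (intro N.finite_Lim_measure_decseq) (auto 4 3 simp: U_def decseq_def intro: order_trans)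
  moreover have "\<Inter>(range U) = limsup W"
    by (simp add: U_def limsup_INF_SUP)
  ultimately have lim: "(\<lambda>n. measure N (U n)) \<longlonglongrightarrow> 0"
    using null by (simp add: measure_def null_sets_def)
  have "e \<le> measure N (U n)" for n
    using W N(2) by (intro order.trans[OF W(3)[of n]] N.finite_measure_mono) (auto simp: U_def)
  then have "e \<le> 0"
    by (intro LIMSEQ_le_const[OF lim]) auto
  with e show False by simp
qed

lemma finite_measure_outside_interval_small:
  fixes N :: "real measure"
  assumes N: "finite_measure N" "sets N = sets borel" and e: "0 < e"
  shows "\<exists>M\<ge>1. measure N (UNIV - {-M..M}) < e"
proof -
  interpret N: finite_measure N by fact
  define U where "U n = {x::real. real n < \<bar>x\<bar>}" for n
  have U_sets: "U n \<in> sets N" for n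
    unfolding U_def N(2) by (intro borel_open open_Collect_less continuous_intros)
  have "(\<lambda>n. measure N (U n)) \<longlonglongrightarrow> measure N (\<Inter>(range U))"
    using U_sets by (intro N.finite_Lim_measure_decseq decseq_SucI) (auto simp: U_def)
  moreover have "\<Inter>(range U) = {}"
  proof -
    have "x \<notin> U (nat \<lceil>\<bar>x\<bar>\<rceil>)" for x
      unfolding U_def by (simp add: not_less)
    then show ?thesis by blast
  qed
  ultimately have "(\<lambda>n. measure N (U n)) \<longlonglongrightarrow> 0"
    by simp
  then have "eventually (\<lambda>n. measure N (U n) < e) sequentially"
    using e by (rule order_tendstoD(2))
  then obtain n where n: "measure N (U n) < e"
    by (auto simp: eventually_sequentially)
  have "measure N (UNIV - {-(real n + 1)..real n + 1}) \<le> measure N (U n)"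
    using U_sets N(2) by (intro N.finite_measure_mono) (auto simp: U_def)
  with n show ?thesis
    by (intro exI[of _ "real n + 1"]) auto
qed

definition ball_mod_2pi :: "real \<Rightarrow> real \<Rightarrow> real set" where
  "ball_mod_2pi \<theta> \<delta> = (\<Union>k::int. ball (\<theta> + 2*pi*k) \<delta>)"

lemma open_ball_mod_2pi: "open (ball_mod_2pi \<theta> \<delta>)"
  unfolding ball_mod_2pi_def by blast

lemma borel_ball_mod_2pi [measurable]: "ball_mod_2pi \<theta> \<delta> \<in> sets borel"
  by (simp add: borel_open open_ball_mod_2pi)

lemma cos_gt_imp_in_ball_mod_2pi:
  assumes "cos \<delta> < cos (x - \<theta>)" "0 \<le> \<delta>" "\<delta> \<le> pi"
  shows "x \<in> ball_mod_2pi \<theta> \<delta>"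
proof -
  define k where "k = \<lfloor>(x - \<theta>)/(2*pi) + 1/2\<rfloor>"
  define y where "y = x - \<theta> - 2*pi*k"
  have "k \<le> (x - \<theta>)/(2*pi) + 1/2" "(x - \<theta>)/(2*pi) + 1/2 < k + 1"
    unfolding k_def by linarith+
  then have "2*pi*k \<le> x - \<theta> + pi" "x - \<theta> + pi < 2*pi*k + 2*pi"
    using pi_gt_zero by (simp_all add: field_simps)
  then have "\<bar>y\<bar> \<le> pi"
    unfolding y_def by linarith
  moreover have "cos y = cos (x - \<theta>)"
    unfolding y_def by (simp add: cos_diff mult.assoc[symmetric])
  ultimately have "\<bar>y\<bar> < \<delta>"
    using assms cos_monotone_0_pi_le[of \<delta> "\<bar>y\<bar>"] by force
  then have "x \<in> ball (\<theta> + 2*pi*k) \<delta>"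
    unfolding y_def by (simp add: dist_real_def abs_minus_commute)
  then show ?thesis
    unfolding ball_mod_2pi_def by blast
qed

lemma measure_ball_mod_2pi_Int_le:
  assumes "0 < \<delta>" "\<delta> \<le> pi" "0 \<le> R"
  shows "measure lebesgue (ball_mod_2pi \<theta> \<delta> \<inter> {-R..R}) \<le> (R/pi + 2) * (2*\<delta>)"
proof -
  define u where "u = (-R - \<delta> - \<theta>)/(2*pi)"
  define v where "v = (R + \<delta> - \<theta>)/(2*pi)"
  define K where "K = {\<lceil>u\<rceil>..\<lfloor>v\<rfloor>}"
  \<comment> \<open>the indices \<open>k\<close> for which \<open>ball (\<theta> + 2*pi*k) \<delta>\<close> meets \<open>[-R, R]\<close>\<close>
  have "v - u = (R + \<delta>)/pi"
    unfolding u_def v_def by (simp add: field_simps)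
  also have "\<dots> \<le> R/pi + 1"
    using assms by (simp add: add_divide_distrib)
  moreover have "real (card K) \<le> v - u + 1"
  proof (cases "\<lceil>u\<rceil> \<le> \<lfloor>v\<rfloor>")
    case True
    then have "real (card K) = \<lfloor>v\<rfloor> - \<lceil>u\<rceil> + 1"
      unfolding K_def by simp
    then show ?thesis
      using of_int_floor_le[of v] le_of_int_ceiling[of u] by linarith
  next
    case False
    then show ?thesis
      unfolding K_def using \<open>v - u = (R + \<delta>)/pi\<close> assms by simp
  qed
  ultimately have "real (card K) \<le> R/pi + 2"
    by linarith
  have "ball_mod_2pi \<theta> \<delta> \<inter> {-R..R} \<subseteq> (\<Union>k\<in>K. ball (\<theta> + 2*pi*k) \<delta>)"
  proof
    fix y assume "y \<in> ball_mod_2pi \<theta> \<delta> \<inter> {-R..R}"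
    then obtain k :: int where "\<bar>\<theta> + 2*pi*k - y\<bar> < \<delta>" "\<bar>y\<bar> \<le> R"
      unfolding ball_mod_2pi_def by (auto simp: dist_real_def)
    then have "u \<le> k" "k \<le> v"
      unfolding u_def v_def using pi_gt_zero by (simp_all add: field_simps)
    then have "k \<in> K"
      unfolding K_def by (simp add: ceiling_le_iff le_floor_iff)
    with \<open>\<bar>\<theta> + 2*pi*k - y\<bar> < \<delta>\<close> show "y \<in> (\<Union>k\<in>K. ball (\<theta> + 2*pi*k) \<delta>)"
      by (auto simp: dist_real_def)
  qed
  then have "measure lebesgue (ball_mod_2pi \<theta> \<delta> \<inter> {-R..R})
      \<le> measure lebesgue (\<Union>k\<in>K. ball (\<theta> + 2*pi*k) \<delta>)"
    by (intro measure_mono_fmeasurable)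
       (auto simp: K_def borel_open open_ball_mod_2pi intro!: fmeasurable.finite_UN)
  also have "\<dots> \<le> (\<Sum>k\<in>K. measure lebesgue (ball (\<theta> + 2*pi*k) \<delta>))"
    by (intro measure_UNION_le) (auto simp: K_def)
  also have "\<dots> = real (card K) * (2*\<delta>)"
    using assms by (simp add: ball_eq_greaterThanLessThan)
  also have "\<dots> \<le> (R/pi + 2) * (2*\<delta>)"
    using \<open>real (card K) \<le> R/pi + 2\<close> assms by (intro mult_right_mono) auto
  finally show ?thesis .
qed

lemma borel_measurable_cis [measurable]: "cis \<in> borel_measurable borel"
  by (intro borel_measurable_continuous_onI continuous_intros)

lemma norm_integral_cis_le:
  assumes "prob_space \<rho>" and [measurable]: "\<phi> \<in> borel_measurable \<rho>"
    and \<delta>: "0 \<le> \<delta>" "\<delta> \<le> pi"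
    and m: "\<And>\<theta>. measure \<rho> {z \<in> space \<rho>. \<phi> z \<in> ball_mod_2pi \<theta> \<delta>} \<le> m"
  shows "norm (\<integral>z. cis (\<phi> z) \<partial>\<rho>) \<le> 1 - (1 - cos \<delta>) * (1 - m)"
proof -
  interpret prob_space \<rho> by fact
  define F where "F = (\<integral>z. cis (\<phi> z) \<partial>\<rho>)"
  define \<theta> where "\<theta> = Arg F"
  define A where "A = {z \<in> space \<rho>. \<phi> z \<in> ball_mod_2pi \<theta> \<delta>}"
  have A_sets [measurable]: "A \<in> sets \<rho>"
    unfolding A_def by measurable
  have int_cis: "integrable \<rho> (\<lambda>z. cis (\<phi> z - \<theta>))"
    by (intro integrable_const_bound[where B=1]) auto
  have int_cos: "integrable \<rho> (\<lambda>z. cos (\<phi> z - \<theta>))"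
    by (intro integrable_const_bound[where B=1]) auto
  have "cmod F = cis (-\<theta>) * (cmod F * cis \<theta>)"
    by (simp add: mult.left_commute cis_mult)
  also have "\<dots> = cis (-\<theta>) * F"
    using rcis_cmod_Arg[of F] by (simp add: \<theta>_def rcis_def)
  also have "\<dots> = (\<integral>z. cis (-\<theta>) * cis (\<phi> z) \<partial>\<rho>)"
    by (simp add: F_def)
  also have "\<dots> = (\<integral>z. cis (\<phi> z - \<theta>) \<partial>\<rho>)"
    by (simp add: cis_mult)
  finally have "cmod F = Re (\<integral>z. cis (\<phi> z - \<theta>) \<partial>\<rho>)"
    by (metis Re_complex_of_real)
  also have "\<dots> = (\<integral>z. cos (\<phi> z - \<theta>) \<partial>\<rho>)"
    using integral_Re[OF int_cis] by simp
  also have "\<dots> \<le> (\<integral>z. cos \<delta> + (1 - cos \<delta>) * indicator A z \<partial>\<rho>)"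
  proof (rule integral_mono[OF int_cos])
    show "integrable \<rho> (\<lambda>z. cos \<delta> + (1 - cos \<delta>) * indicator A z)"
      by (intro Bochner_Integration.integrable_add integrable_mult_right integrable_real_indicator)
         (auto simp: emeasure_eq_measure)
    show "cos (\<phi> z - \<theta>) \<le> cos \<delta> + (1 - cos \<delta>) * indicator A z" if "z \<in> space \<rho>" for z
      using that cos_gt_imp_in_ball_mod_2pi[of \<delta> "\<phi> z" \<theta>] \<delta>
      by (cases "z \<in> A") (auto simp: A_def intro: leI)
  qed
  also have "\<dots> = cos \<delta> + (1 - cos \<delta>) * measure \<rho> A"
    by (simp add: prob_space emeasure_eq_measure)
  also have "\<dots> \<le> cos \<delta> + (1 - cos \<delta>) * m"
    using m[of \<theta>] by (intro add_left_mono mult_left_mono) (auto simp: A_def)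
  finally show ?thesis
    by (simp add: F_def algebra_simps)
qed

lemma measure_le_of_derivative_lower_bound:
  fixes \<psi> :: "real \<Rightarrow> real"
  assumes S: "S \<in> lmeasurable"
    and der: "\<And>z. z \<in> S \<Longrightarrow> (\<psi> has_real_derivative \<psi>' z) (at z within S)"
    and inj: "inj_on \<psi> S" and \<gamma>: "\<And>z. z \<in> S \<Longrightarrow> \<gamma> \<le> \<bar>\<psi>' z\<bar>"
    and T: "\<psi> ` S \<subseteq> T" "T \<in> lmeasurable"
  shows "\<gamma> * measure lebesgue S \<le> measure lebesgue T"
proof -
  have "\<psi> differentiable_on S"
    using der unfolding differentiable_on_def differentiable_def has_field_derivative_def by blast
  then have "\<psi> ` S \<in> sets lebesgue"
    using S by (intro differentiable_image_in_sets_lebesgue) auto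
  then have image: "\<psi> ` S \<in> lmeasurable"
    using T by (intro fmeasurableI2[OF T(2)])
  then have change: "(\<lambda>z. \<bar>\<psi>' z\<bar> * 1) absolutely_integrable_on S
      \<and> integral S (\<lambda>z. \<bar>\<psi>' z\<bar> * 1) = measure lebesgue (\<psi> ` S)"
    using has_absolute_integral_change_of_variables_1'[OF _ der inj, of "\<lambda>_. 1"] S
    by (simp add: lmeasure_integral absolutely_integrable_on_const)
  have "\<gamma> * measure lebesgue S = integral S (\<lambda>z. \<gamma> * 1)"
    using S by (simp only: lmeasure_integral integral_mult_right)
  also have "\<dots> \<le> integral S (\<lambda>z. \<bar>\<psi>' z\<bar> * 1)"
    using change \<gamma> S by (intro integral_le) (auto simp: integrable_on_const absolutely_integrable_on_def)
  also have "\<dots> = measure lebesgue (\<psi> ` S)"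
    using change by blast
  also have "\<dots> \<le> measure lebesgue T"
    using image T by (intro measure_mono_fmeasurable) auto
  finally show ?thesis .
qed

lemma quadratic_eq_imp_derivative_sum_eq_0:
  fixes s t x y :: real
  assumes "s*x + t*x\<^sup>2 = s*y + t*y\<^sup>2" "x \<noteq> y"
  shows "(s + 2*t*x) + (s + 2*t*y) = 0"
proof -
  have "(x - y) * ((s + 2*t*x) + (s + 2*t*y)) = 2 * ((s*x + t*x\<^sup>2) - (s*y + t*y\<^sup>2))"
    by (simp add: algebra_simps power2_eq_square)
  with assms show ?thesis
    by simp
qed

lemma abs_quadratic_le:
  fixes s t z M :: real
  assumes "\<bar>z\<bar> \<le> M"
  shows "\<bar>s*z + t*z\<^sup>2\<bar> \<le> M*\<bar>s\<bar> + M\<^sup>2*\<bar>t\<bar>"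
proof -
  have "z\<^sup>2 \<le> M\<^sup>2"
    using power_mono[OF assms abs_ge_zero, of 2] by simp
  then have "\<bar>t*z\<^sup>2\<bar> \<le> M\<^sup>2*\<bar>t\<bar>"
    using mult_left_mono[of "z\<^sup>2" "M\<^sup>2" "\<bar>t\<bar>"] by (simp add: abs_mult mult.commute)
  moreover have "\<bar>s*z\<bar> \<le> M*\<bar>s\<bar>"
    using mult_left_mono[OF assms, of "\<bar>s\<bar>"] by (simp add: abs_mult mult.commute)
  ultimately show ?thesis
    by linarith
qed

lemma measure_quadratic_preimage_le_of_derivative_bound:
  fixes s t M \<gamma> :: real
  assumes [measurable]: "J \<in> sets borel" "W \<in> sets borel" and J: "J \<subseteq> {-M..M}"
    and derivative: "\<And>z. z \<in> J \<Longrightarrow> \<gamma> \<le> \<bar>s + 2*t*z\<bar>"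
    and no_symmetric_pair: "\<And>x y. x \<in> J \<Longrightarrow> y \<in> J \<Longrightarrow> (s + 2*t*x) + (s + 2*t*y) \<noteq> 0"
  defines "R \<equiv> M*\<bar>s\<bar> + M\<^sup>2*\<bar>t\<bar>"
  shows "\<gamma> * measure lebesgue {z\<in>J. s*z + t*z\<^sup>2 \<in> W} \<le> measure lebesgue (W \<inter> {-R..R})"
proof (rule measure_le_of_derivative_lower_bound)
  define \<psi> where "\<psi> z = s*z + t*z\<^sup>2" for z
  have [measurable]: "\<psi> \<in> borel_measurable borel"
    unfolding \<psi>_def by (intro borel_measurable_continuous_onI continuous_intros)
  have "{z\<in>J. \<psi> z \<in> W} \<in> sets borel"
    by measurable
  then show "{z\<in>J. s*z + t*z\<^sup>2 \<in> W} \<in> lmeasurable"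
    using J by (intro bounded_set_imp_lmeasurable bounded_subset[OF bounded_closed_interval, of _ "-M" M])
      (auto simp: \<psi>_def)
  show "(\<psi> has_real_derivative s + 2*t*z) (at z within {z\<in>J. s*z + t*z\<^sup>2 \<in> W})" for z
    unfolding \<psi>_def by (auto intro!: derivative_eq_intros)
  show "inj_on \<psi> {z\<in>J. s*z + t*z\<^sup>2 \<in> W}"
  proof (rule inj_onI)
    fix x y assume "x \<in> {z\<in>J. s*z + t*z\<^sup>2 \<in> W}" "y \<in> {z\<in>J. s*z + t*z\<^sup>2 \<in> W}" "\<psi> x = \<psi> y"
    then show "x = y"
      using no_symmetric_pair quadratic_eq_imp_derivative_sum_eq_0[of s x t y] by (auto simp: \<psi>_def)
  qed
  show "\<gamma> \<le> \<bar>s + 2*t*z\<bar>" if "z \<in> {z\<in>J. s*z + t*z\<^sup>2 \<in> W}" for z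
    using that derivative by auto
  show "\<psi> ` {z\<in>J. s*z + t*z\<^sup>2 \<in> W} \<subseteq> W \<inter> {-R..R}"
  proof
    fix y assume "y \<in> \<psi> ` {z\<in>J. s*z + t*z\<^sup>2 \<in> W}"
    then obtain z where "z \<in> J" "\<psi> z \<in> W" "y = \<psi> z"
      by (auto simp: \<psi>_def)
    then show "y \<in> W \<inter> {-R..R}"
      using J abs_quadratic_le[of z M s t] by (auto simp: \<psi>_def R_def abs_le_iff)
  qed
  show "W \<inter> {-R..R} \<in> lmeasurable"
    by (intro bounded_set_imp_lmeasurable bounded_subset[OF bounded_closed_interval, of _ "-R" R]) auto
qed

lemma measure_quadratic_preimage_le:
  fixes s t M \<gamma> :: real
  assumes [measurable]: "W \<in> sets borel" and \<gamma>: "0 < \<gamma>"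
  defines "R \<equiv> M*\<bar>s\<bar> + M\<^sup>2*\<bar>t\<bar>"
  shows "measure lebesgue {z\<in>{-M..M}. s*z + t*z\<^sup>2 \<in> W}
    \<le> measure lebesgue {z\<in>{-M..M}. \<bar>s + 2*t*z\<bar> < \<gamma>} + 2 * measure lebesgue (W \<inter> {-R..R}) / \<gamma>"
proof -
  define B where "B = {z\<in>{-M..M}. \<bar>s + 2*t*z\<bar> < \<gamma>}"
  define Jpos where "Jpos = {z\<in>{-M..M}. \<gamma> \<le> s + 2*t*z}"
  define Jneg where "Jneg = {z\<in>{-M..M}. s + 2*t*z \<le> -\<gamma>}"
  have [measurable]: "(\<lambda>z. s*z + t*z\<^sup>2) \<in> borel_measurable borel"
    by (intro borel_measurable_continuous_onI continuous_intros)
  have [measurable]: "B \<in> sets borel" "Jpos \<in> sets borel" "Jneg \<in> sets borel"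
    unfolding B_def Jpos_def Jneg_def by measurable
  have bounded_lmeasurable: "A \<in> lmeasurable" if "A \<in> sets borel" "A \<subseteq> {-M..M}" for A
    using that by (intro bounded_set_imp_lmeasurable bounded_subset[OF bounded_closed_interval]) auto
  have pos: "\<gamma> * measure lebesgue {z\<in>Jpos. s*z + t*z\<^sup>2 \<in> W} \<le> measure lebesgue (W \<inter> {-R..R})"
    unfolding R_def using \<gamma>
    by (intro measure_quadratic_preimage_le_of_derivative_bound) (auto simp: Jpos_def)
  have neg: "\<gamma> * measure lebesgue {z\<in>Jneg. s*z + t*z\<^sup>2 \<in> W} \<le> measure lebesgue (W \<inter> {-R..R})"
    unfolding R_def using \<gamma>
    by (intro measure_quadratic_preimage_le_of_derivative_bound) (auto simp: Jneg_def)
  have "measure lebesgue {z\<in>{-M..M}. s*z + t*z\<^sup>2 \<in> W}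
      \<le> measure lebesgue (B \<union> {z\<in>Jpos. s*z + t*z\<^sup>2 \<in> W} \<union> {z\<in>Jneg. s*z + t*z\<^sup>2 \<in> W})"
    by (intro measure_mono_fmeasurable bounded_lmeasurable) (auto simp: B_def Jpos_def Jneg_def)
  also have "\<dots> \<le> measure lebesgue B + measure lebesgue {z\<in>Jpos. s*z + t*z\<^sup>2 \<in> W}
      + measure lebesgue {z\<in>Jneg. s*z + t*z\<^sup>2 \<in> W}"
    by (intro order.trans[OF measure_Un_le] add_right_mono measure_Un_le) auto
  also have "\<dots> \<le> measure lebesgue B + 2 * measure lebesgue (W \<inter> {-R..R}) / \<gamma>"
    using pos neg \<gamma> by (simp add: field_simps)
  finally show ?thesis
    by (simp add: B_def)
qed

lemma measure_quadratic_preimage_ball_mod_2pi_le: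
  fixes s t M \<gamma> :: real
  assumes \<delta>: "0 < \<delta>" "\<delta> \<le> pi" and "0 \<le> M" "0 < \<gamma>"
  shows "measure lebesgue {z\<in>{-M..M}. s*z + t*z\<^sup>2 \<in> ball_mod_2pi \<theta> \<delta>}
    \<le> measure lebesgue {z\<in>{-M..M}. \<bar>s + 2*t*z\<bar> < \<gamma>} + 4 * \<delta> * (M*\<bar>s\<bar> + M\<^sup>2*\<bar>t\<bar> + 2) / \<gamma>"
proof -
  define R where "R = M*\<bar>s\<bar> + M\<^sup>2*\<bar>t\<bar>"
  have "0 \<le> R"
    using \<open>0 \<le> M\<close> by (simp add: R_def)
  have "measure lebesgue (ball_mod_2pi \<theta> \<delta> \<inter> {-R..R}) \<le> (R/pi + 2) * (2*\<delta>)"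
    using \<delta> \<open>0 \<le> R\<close> by (rule measure_ball_mod_2pi_Int_le)
  also have "\<dots> \<le> (R + 2) * (2*\<delta>)"
    using \<delta> \<open>0 \<le> R\<close> pi_ge_two mult_left_mono[of 1 pi R]
    by (intro mult_right_mono add_right_mono) (auto simp: divide_le_eq)
  finally show ?thesis
    using measure_quadratic_preimage_le[of "ball_mod_2pi \<theta> \<delta>" \<gamma> M s t] \<open>0 < \<gamma>\<close>
    by (auto simp: R_def divide_right_mono field_simps)
qed

lemma measure_quadratic_preimage_ball_mod_2pi_le_linear:
  fixes s t M :: real
  assumes \<delta>: "0 < \<delta>" "\<delta> \<le> pi" and M: "0 \<le> M" and dominant: "4*M*\<bar>t\<bar> \<le> \<bar>s\<bar>" and "s \<noteq> 0"
  shows "measure lebesgue {z\<in>{-M..M}. s*z + t*z\<^sup>2 \<in> ball_mod_2pi \<theta> \<delta>} \<le> 16*M*\<delta> + 16*\<delta>/\<bar>s\<bar>"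
proof -
  have "\<bar>s\<bar>/2 \<le> \<bar>s + 2*t*z\<bar>" if "-M \<le> z" "z \<le> M" for z
  proof -
    have "\<bar>t\<bar> * \<bar>z\<bar> \<le> \<bar>t\<bar> * M"
      using that by (intro mult_left_mono) auto
    also have "\<bar>t\<bar> * M \<le> \<bar>s\<bar>/4"
      using dominant by (simp add: algebra_simps)
    finally have "\<bar>2*t*z\<bar> \<le> \<bar>s\<bar>/2"
      by (simp add: abs_mult)
    then show ?thesis
      using abs_triangle_ineq2[of s "-(2*t*z)"] by simp
  qed
  then have empty: "{z\<in>{-M..M}. \<bar>s + 2*t*z\<bar> < \<bar>s\<bar>/2} = {}"
    by (auto simp: not_less[symmetric])
  have "M*(4*M*\<bar>t\<bar>) \<le> M*\<bar>s\<bar>"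
    using dominant M by (intro mult_left_mono) auto
  moreover have "0 \<le> M*M*\<bar>t\<bar>"
    using M by simp
  ultimately have R: "M*\<bar>s\<bar> + M\<^sup>2*\<bar>t\<bar> \<le> 2*M*\<bar>s\<bar>"
    by (simp add: power2_eq_square algebra_simps)
  have "measure lebesgue {z\<in>{-M..M}. s*z + t*z\<^sup>2 \<in> ball_mod_2pi \<theta> \<delta>}
      \<le> 4 * \<delta> * (M*\<bar>s\<bar> + M\<^sup>2*\<bar>t\<bar> + 2) / (\<bar>s\<bar>/2)"
    using measure_quadratic_preimage_ball_mod_2pi_le[OF \<delta> M, of "\<bar>s\<bar>/2" s t \<theta>, unfolded empty]
      \<open>s \<noteq> 0\<close> by simp
  also have "\<dots> \<le> 4 * \<delta> * (2*M*\<bar>s\<bar> + 2) / (\<bar>s\<bar>/2)"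
    using R \<delta> by (intro divide_right_mono mult_left_mono) auto
  also have "\<dots> = 16*M*\<delta> + 16*\<delta>/\<bar>s\<bar>"
    using \<open>s \<noteq> 0\<close> by (simp add: field_simps)
  finally show ?thesis .
qed

lemma measure_quadratic_preimage_ball_mod_2pi_le_quadratic:
  fixes s t M g :: real
  assumes \<delta>: "0 < \<delta>" "\<delta> \<le> pi" and M: "0 \<le> M" and "\<bar>s\<bar> \<le> 4*M*\<bar>t\<bar>" "t \<noteq> 0" "0 < g"
  shows "measure lebesgue {z\<in>{-M..M}. s*z + t*z\<^sup>2 \<in> ball_mod_2pi \<theta> \<delta>}
    \<le> g + 20*M\<^sup>2*\<delta>/g + 8*\<delta>/(g*\<bar>t\<bar>)"
proof -
  have "{z\<in>{-M..M}. \<bar>s + 2*t*z\<bar> < g*\<bar>t\<bar>} \<subseteq> ball (-s/(2*t)) (g/2)"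
  proof clarify
    fix z assume z: "\<bar>s + 2*t*z\<bar> < g*\<bar>t\<bar>"
    have "-s/(2*t) - z = -((s + 2*t*z)/(2*t))"
      using \<open>t \<noteq> 0\<close> by (simp add: field_simps)
    then have "dist (-s/(2*t)) z = \<bar>s + 2*t*z\<bar> / (2*\<bar>t\<bar>)"
      by (simp add: dist_real_def abs_divide abs_mult)
    also have "\<dots> < g*\<bar>t\<bar> / (2*\<bar>t\<bar>)"
      using z \<open>t \<noteq> 0\<close> by (intro divide_strict_right_mono) auto
    also have "\<dots> = g/2"
      using \<open>t \<noteq> 0\<close> by simp
    finally show "z \<in> ball (-s/(2*t)) (g/2)"
      by simp
  qed
  moreover have "{z\<in>{-M..M}. \<bar>s + 2*t*z\<bar> < g*\<bar>t\<bar>} \<in> sets borel"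
    by measurable
  ultimately have "measure lebesgue {z\<in>{-M..M}. \<bar>s + 2*t*z\<bar> < g*\<bar>t\<bar>}
      \<le> measure lebesgue (ball (-s/(2*t)) (g/2))"
    by (intro measure_mono_fmeasurable) auto
  also have "\<dots> = g"
    using \<open>0 < g\<close> by (simp add: ball_eq_greaterThanLessThan)
  finally have near_critical: "measure lebesgue {z\<in>{-M..M}. \<bar>s + 2*t*z\<bar> < g*\<bar>t\<bar>} \<le> g" .
  have "M*\<bar>s\<bar> \<le> M*(4*M*\<bar>t\<bar>)"
    using assms by (intro mult_left_mono) auto
  then have R: "M*\<bar>s\<bar> + M\<^sup>2*\<bar>t\<bar> \<le> 5*M\<^sup>2*\<bar>t\<bar>"
    by (simp add: power2_eq_square)
  have "measure lebesgue {z\<in>{-M..M}. s*z + t*z\<^sup>2 \<in> ball_mod_2pi \<theta> \<delta>}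
      \<le> g + 4 * \<delta> * (M*\<bar>s\<bar> + M\<^sup>2*\<bar>t\<bar> + 2) / (g*\<bar>t\<bar>)"
    using measure_quadratic_preimage_ball_mod_2pi_le[OF \<delta> M, of "g*\<bar>t\<bar>" s t \<theta>] near_critical
      assms by simp
  also have "\<dots> \<le> g + 4 * \<delta> * (5*M\<^sup>2*\<bar>t\<bar> + 2) / (g*\<bar>t\<bar>)"
    using R assms by (intro add_left_mono divide_right_mono mult_left_mono) auto
  also have "\<dots> = g + 20*M\<^sup>2*\<delta>/g + 8*\<delta>/(g*\<bar>t\<bar>)"
    using assms by (simp add: field_simps)
  finally show ?thesis .
qed

lemma measure_quadratic_preimage_ball_mod_2pi_le_uniform:
  fixes s t M \<alpha> g :: real
  assumes \<delta>: "0 < \<delta>" "\<delta> \<le> pi" and M: "1 \<le> M" and \<alpha>: "0 < \<alpha>" "\<alpha> \<le> \<bar>s\<bar> + \<bar>t\<bar>" and g: "0 < g"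
  shows "measure lebesgue {z\<in>{-M..M}. s*z + t*z\<^sup>2 \<in> ball_mod_2pi \<theta> \<delta>}
    \<le> g + 16*M*\<delta> + 32*\<delta>/\<alpha> + 20*M\<^sup>2*\<delta>/g + 8*(4*M + 1)*\<delta>/(g*\<alpha>)"
proof -
  have nonneg: "0 \<le> 16*M*\<delta>" "0 \<le> 32*\<delta>/\<alpha>" "0 \<le> 20*M\<^sup>2*\<delta>/g" "0 \<le> 8*(4*M + 1)*\<delta>/(g*\<alpha>)"
    using \<delta> M \<alpha> g by simp_all
  show ?thesis
  proof (cases "4*M*\<bar>t\<bar> \<le> \<bar>s\<bar>")
    \<comment> \<open>The linear term dominates, so the phase has no critical point in \<open>[-M, M]\<close>.\<close>
    case True
    moreover have "\<bar>t\<bar> \<le> 4*M*\<bar>t\<bar>"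
      using M mult_right_mono[of 1 "4*M" "\<bar>t\<bar>"] by simp
    ultimately have s: "\<alpha>/2 \<le> \<bar>s\<bar>"
      using \<alpha> by linarith
    then have "16*\<delta>/\<bar>s\<bar> \<le> 32*\<delta>/\<alpha>"
      using \<alpha> \<delta> by (simp add: field_simps)
    moreover have "s \<noteq> 0"
      using s \<alpha> by auto
    then have "measure lebesgue {z\<in>{-M..M}. s*z + t*z\<^sup>2 \<in> ball_mod_2pi \<theta> \<delta>}
        \<le> 16*M*\<delta> + 16*\<delta>/\<bar>s\<bar>"
      using measure_quadratic_preimage_ball_mod_2pi_le_linear[OF \<delta>, of M t s \<theta>] True M by simp
    ultimately show ?thesis
      using g nonneg by linarith
  next
    \<comment> \<open>Now \<open>|t|\<close> is bounded below, and a window of width \<open>g\<close> around the critical point is cut out.\<close>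
    case False
    then have t: "\<alpha>/(4*M + 1) < \<bar>t\<bar>"
      using \<alpha> M by (simp add: field_simps)
    moreover have "0 < \<alpha>/(4*M + 1)"
      using \<alpha> M by simp
    ultimately have "8*\<delta>/(g*\<bar>t\<bar>) \<le> 8*\<delta>/(g*(\<alpha>/(4*M + 1)))"
      using g \<delta> by (intro divide_left_mono mult_left_mono mult_pos_pos) auto
    also have "\<dots> = 8*(4*M + 1)*\<delta>/(g*\<alpha>)"
      using M by (simp add: field_simps)
    moreover have "t \<noteq> 0" "\<bar>s\<bar> \<le> 4*M*\<bar>t\<bar>"
      using False t \<alpha> M by (auto simp: field_simps)
    then have "measure lebesgue {z\<in>{-M..M}. s*z + t*z\<^sup>2 \<in> ball_mod_2pi \<theta> \<delta>}
        \<le> g + 20*M\<^sup>2*\<delta>/g + 8*\<delta>/(g*\<bar>t\<bar>)"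
      using measure_quadratic_preimage_ball_mod_2pi_le_quadratic[OF \<delta>, of M s t g \<theta>] M g by simp
    ultimately show ?thesis
      using nonneg by linarith
  qed
qed

lemma measure_quadratic_preimage_ball_mod_2pi_small:
  fixes M \<alpha> \<kappa> :: real
  assumes M: "1 \<le> M" and \<alpha>: "0 < \<alpha>" and \<kappa>: "0 < \<kappa>"
  shows "\<exists>\<delta>>0. \<delta> \<le> pi \<and> (\<forall>s t \<theta>. \<alpha> \<le> norm (s, t) \<longrightarrow>
           measure lebesgue {z\<in>{-M..M}. s*z + t*z\<^sup>2 \<in> ball_mod_2pi \<theta> \<delta>} < \<kappa>)"
proof -
  define g where "g = \<kappa>/3"
  define C where "C = 16*M + 32/\<alpha> + 20*M\<^sup>2/g + 8*(4*M + 1)/(g*\<alpha>)"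
  define \<delta> where "\<delta> = min pi (g/C)"
  have g: "0 < g"
    using \<kappa> by (simp add: g_def)
  then have "0 < C"
    using M \<alpha> by (simp add: C_def add_pos_nonneg)
  then have \<delta>: "0 < \<delta>" "\<delta> \<le> pi" "\<delta> * C \<le> g"
    using g by (auto simp: \<delta>_def min_def field_simps)
  have "16*M*\<delta> + 32*\<delta>/\<alpha> + 20*M\<^sup>2*\<delta>/g + 8*(4*M + 1)*\<delta>/(g*\<alpha>) = \<delta> * C"
    by (simp add: C_def algebra_simps)
  then have "measure lebesgue {z\<in>{-M..M}. s*z + t*z\<^sup>2 \<in> ball_mod_2pi \<theta> \<delta>} < \<kappa>"
    if "\<alpha> \<le> norm (s, t)" for s t \<theta>
    using measure_quadratic_preimage_ball_mod_2pi_le_uniform[OF \<delta>(1,2) M \<alpha>, of s t g \<theta>]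
      that norm_Pair_le[of s t] g \<delta>(3) \<kappa> by (simp add: g_def)
  with \<delta> show ?thesis
    by blast
qed

lemma absolutely_continuous_quadratic_phase_small:
  fixes N :: "real measure"
  assumes N: "finite_measure N" "sets N = sets borel" "absolutely_continuous lborel N"
    and \<alpha>: "0 < \<alpha>" and e: "0 < e"
  shows "\<exists>\<delta>>0. \<delta> \<le> pi \<and> (\<forall>s t \<theta>. \<alpha> \<le> norm (s, t) \<longrightarrow>
           measure N {z. s*z + t*z\<^sup>2 \<in> ball_mod_2pi \<theta> \<delta>} < e)"
proof -
  interpret N: finite_measure N by fact
  obtain M where M: "1 \<le> M" "measure N (UNIV - {-M..M}) < e/2"
    using finite_measure_outside_interval_small[OF N(1,2), of "e/2"] e by auto
  obtain \<kappa> where \<kappa>: "0 < \<kappa>" "\<And>W. W \<in> sets lborel \<Longrightarrow> emeasure lborel W < ennreal \<kappa> \<Longrightarrow> measure N W < e/2"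
    using absolutely_continuous_measure_small[of N lborel "e/2"] N e by auto
  obtain \<delta> where \<delta>: "0 < \<delta>" "\<delta> \<le> pi" and small: "\<And>s t \<theta>. \<alpha> \<le> norm (s, t) \<Longrightarrow>
      measure lebesgue {z\<in>{-M..M}. s*z + t*z\<^sup>2 \<in> ball_mod_2pi \<theta> \<delta>} < \<kappa>"
    using measure_quadratic_preimage_ball_mod_2pi_small[OF M(1) \<alpha> \<kappa>(1)] by blast
  have "measure N {z. s*z + t*z\<^sup>2 \<in> ball_mod_2pi \<theta> \<delta>} < e" if "\<alpha> \<le> norm (s, t)" for s t \<theta>
  proof -
    define S where "S = {z\<in>{-M..M}. s*z + t*z\<^sup>2 \<in> ball_mod_2pi \<theta> \<delta>}"
    have [measurable]: "S \<in> sets borel" "{z. s*z + t*z\<^sup>2 \<in> ball_mod_2pi \<theta> \<delta>} \<in> sets borel"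
      unfolding S_def by measurable
    have "S \<in> lmeasurable"
      by (intro bounded_set_imp_lmeasurable bounded_subset[OF bounded_closed_interval, of _ "-M" M])
         (auto simp: S_def)
    have "emeasure lborel S = emeasure lebesgue S"
      by simp
    also have "\<dots> = ennreal (measure lebesgue S)"
      using \<open>S \<in> lmeasurable\<close> by (simp add: emeasure_eq_measure2)
    also have "\<dots> < ennreal \<kappa>"
      using small[OF that] unfolding S_def by (intro ennreal_lessI \<kappa>(1))
    finally have "emeasure lborel S < ennreal \<kappa>" .
    then have "measure N S < e/2"
      by (intro \<kappa>(2)) auto
    have "measure N {z. s*z + t*z\<^sup>2 \<in> ball_mod_2pi \<theta> \<delta>} \<le> measure N (S \<union> (UNIV - {-M..M}))"
      using N(2) by (intro N.finite_measure_mono) (auto simp: S_def)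
    also have "\<dots> \<le> measure N S + measure N (UNIV - {-M..M})"
      using N(2) by (intro measure_Un_le) auto
    finally show ?thesis
      using \<open>measure N S < e/2\<close> M(2) by linarith
  qed
  with \<delta> show ?thesis
    by blast
qed

lemma SUP_norm_integral_cis_quadratic_less_1:
  fixes \<rho> :: "real measure"
  assumes \<rho>: "prob_space \<rho>" "sets \<rho> = sets borel" and \<delta>: "0 < \<delta>" "\<delta> \<le> pi" and "m < 1"
    and mass: "\<And>s t \<theta>. \<alpha> \<le> norm (s, t) \<Longrightarrow> measure \<rho> {z. s*z + t*z\<^sup>2 \<in> ball_mod_2pi \<theta> \<delta>} \<le> m"
  shows "(SUP p \<in> {p :: real \<times> real. norm p \<ge> \<alpha>}.
           norm (\<integral>z. cis (fst p * z + snd p * z\<^sup>2) \<partial>\<rho>)) < 1"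
proof -
  have "(\<lambda>z. s*z + t*z\<^sup>2) \<in> borel_measurable \<rho>" for s t
    by (subst measurable_cong_sets[OF \<rho>(2) refl]) measurable
  then have bound: "norm (\<integral>z. cis (fst p * z + snd p * z\<^sup>2) \<partial>\<rho>) \<le> 1 - (1 - cos \<delta>) * (1 - m)"
    if "\<alpha> \<le> norm p" for p
    using norm_integral_cis_le[OF \<rho>(1), of "\<lambda>z. fst p * z + snd p * z\<^sup>2" \<delta> m]
      mass[of "fst p" "snd p"] sets_eq_imp_space_eq[OF \<rho>(2)] that \<delta> by simp
  have "(max \<alpha> 0, 0) \<in> {p :: real \<times> real. norm p \<ge> \<alpha>}"
    by (simp add: norm_Pair)
  then have "(SUP p \<in> {p :: real \<times> real. norm p \<ge> \<alpha>}. norm (\<integral>z. cis (fst p * z + snd p * z\<^sup>2) \<partial>\<rho>))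
      \<le> 1 - (1 - cos \<delta>) * (1 - m)"
    using bound by (intro cSUP_least) blast+
  also have "\<dots> < 1"
    using cos_monotone_0_pi[of 0 \<delta>] \<delta> \<open>m < 1\<close> by simp
  finally show ?thesis .
qed

theorem proposition2:
  fixes \<rho> \<rho>ac \<rho>d \<rho>s :: "real measure" and a b c :: real
  assumes \<rho>: "prob_space \<rho>" "sets \<rho> = sets borel"
    and \<rho>ac: "prob_space \<rho>ac" "sets \<rho>ac = sets borel" "absolutely_continuous lborel \<rho>ac"
    and \<rho>d: "prob_space \<rho>d" "sets \<rho>d = sets borel" "discrete_measure \<rho>d"
    and \<rho>s: "prob_space \<rho>s" "sets \<rho>s = sets borel" "singular_continuous_measure \<rho>s"
    and abc: "a \<ge> 0" "b \<ge> 0" "c \<ge> 0" "a + b + c = 1"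
    and decomposition: "\<forall>A \<in> sets borel. measure \<rho> A =
            a * measure \<rho>ac A + b * measure \<rho>d A + c * measure \<rho>s A"
    and "a > 0"
  shows "\<forall>\<alpha>>0. (SUP p \<in> {p :: real \<times> real. norm p \<ge> \<alpha>}.
            norm (\<integral>z. cis (fst p * z + snd p * z\<^sup>2) \<partial>\<rho>)) < 1"
proof (intro allI impI)
  fix \<alpha> :: real
  assume "0 < \<alpha>"
  interpret \<rho>ac: prob_space \<rho>ac by fact
  interpret \<rho>d: prob_space \<rho>d by fact
  interpret \<rho>s: prob_space \<rho>s by fact
  obtain \<delta> where \<delta>: "0 < \<delta>" "\<delta> \<le> pi" and ac_small: "\<And>s t \<theta>. \<alpha> \<le> norm (s, t) \<Longrightarrow>
      measure \<rho>ac {z. s*z + t*z\<^sup>2 \<in> ball_mod_2pi \<theta> \<delta>} < 1/2"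
    using absolutely_continuous_quadratic_phase_small[OF \<rho>ac.finite_measure_axioms \<rho>ac(2,3) \<open>0 < \<alpha>\<close>, of "1/2"]
    by auto
  have "measure \<rho> {z. s*z + t*z\<^sup>2 \<in> ball_mod_2pi \<theta> \<delta>} \<le> 1 - a/2"
    if "\<alpha> \<le> norm (s, t)" for s t \<theta>
  proof -
    let ?A = "{z. s*z + t*z\<^sup>2 \<in> ball_mod_2pi \<theta> \<delta>}"
    have "?A \<in> sets borel"
      by measurable
    then have "measure \<rho> ?A = a * measure \<rho>ac ?A + b * measure \<rho>d ?A + c * measure \<rho>s ?A"
      using decomposition by blast
    also have "\<dots> \<le> a * (1/2) + b * 1 + c * 1"
      using less_imp_le[OF ac_small[OF that]] abc
      by (intro add_mono mult_left_mono \<rho>d.prob_le_1 \<rho>s.prob_le_1) auto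
    finally show ?thesis
      using abc by simp
  qed
  then show "(SUP p \<in> {p :: real \<times> real. norm p \<ge> \<alpha>}.
      norm (\<integral>z. cis (fst p * z + snd p * z\<^sup>2) \<partial>\<rho>)) < 1"
    by (intro SUP_norm_integral_cis_quadratic_less_1[OF \<rho> \<delta>, of "1 - a/2"]) (use \<open>a > 0\<close> in auto)
qed

end
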